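(* Consider the upper half-space model $\mathbb{H}^3=\{(x_1,x_2,x_3)\in\mathbb{R}^3: x_3>0\}$ with metric $g=\frac{1}{x_3^2}(dx_1^2+dx_2^2+dx_3^2)$. Let $E$ be a complete, non-parabolic end of revolution in $\mathbb{H}^3$ about the $x_3$-axis. Then $\inf_{p\in E}x_3(p)=0$.
   Context: A complete end of revolution about the $x_3$-axis is the set $E=\{(\gamma_1(s)\cos\theta,\gamma_1(s)\sin\theta,\gamma_2(s)): s\ge0,\ \theta\in[0,2\pi)\}$, where $\gamma(s)=(\gamma_1(s),0,\gamma_2(s))$, $s\in[0,\infty)$, is a smooth regular curve with $\gamma_1>0$, $\gamma_2>0$ and infinite hyperbolic length; $E$ carries the induced metric. An end $E$ is parabolic if every bounded harmonic function on $E$ is determined by its boundary values; otherwise it is non-parabolic. *)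

theory Defs
  imports "HOL-Analysis.Analysis"
begin

definition smooth_real :: "(real \<Rightarrow> real) \<Rightarrow> bool" where
  "smooth_real f \<longleftrightarrow> (\<forall>k x. ((deriv ^^ k) f) differentiable (at x))"

text \<open>Profile curve gamma(s) = (g1 s, 0, g2 s), s \<ge> 0, in the upper half-space model.
  Hyperbolic speed |gamma'|_hyp = sqrt(g1'^2 + g2'^2) / g2.\<close>
definition hyp_speed :: "(real \<Rightarrow> real) \<Rightarrow> (real \<Rightarrow> real) \<Rightarrow> real \<Rightarrow> real" where
  "hyp_speed g1 g2 s = sqrt ((deriv g1 s)\<^sup>2 + (deriv g2 s)\<^sup>2) / g2 s"

definition complete_end_curve :: "(real \<Rightarrow> real) \<Rightarrow> (real \<Rightarrow> real) \<Rightarrow> bool" where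
  "complete_end_curve g1 g2 \<longleftrightarrow>
     smooth_real g1 \<and> smooth_real g2 \<and>
     (\<forall>s\<ge>0. g1 s > 0 \<and> g2 s > 0 \<and> (deriv g1 s)\<^sup>2 + (deriv g2 s)\<^sup>2 > 0) \<and>
     filterlim (\<lambda>T. integral {0..T} (hyp_speed g1 g2)) at_top at_top"

definition end_set :: "(real \<Rightarrow> real) \<Rightarrow> (real \<Rightarrow> real) \<Rightarrow> (real \<times> real \<times> real) set" where
  "end_set g1 g2 = {(g1 s * cos \<theta>, g1 s * sin \<theta>, g2 s) | s \<theta>. s \<ge> 0 \<and> \<theta> \<in> {0..<2*pi}}"

text \<open>Induced metric in the coordinates (s, theta):
  g = G11 ds^2 + G22 dtheta^2.\<close>
definition G11 :: "(real \<Rightarrow> real) \<Rightarrow> (real \<Rightarrow> real) \<Rightarrow> real \<Rightarrow> real" where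
  "G11 g1 g2 s = ((deriv g1 s)\<^sup>2 + (deriv g2 s)\<^sup>2) / (g2 s)\<^sup>2"

definition G22 :: "(real \<Rightarrow> real) \<Rightarrow> (real \<Rightarrow> real) \<Rightarrow> real \<Rightarrow> real" where
  "G22 g1 g2 s = (g1 s)\<^sup>2 / (g2 s)\<^sup>2"

definition pd_s :: "(real \<times> real \<Rightarrow> real) \<Rightarrow> real \<times> real \<Rightarrow> real" where
  "pd_s u p = deriv (\<lambda>t. u (t, snd p)) (fst p)"

definition pd_t :: "(real \<times> real \<Rightarrow> real) \<Rightarrow> real \<times> real \<Rightarrow> real" where
  "pd_t u p = deriv (\<lambda>t. u (fst p, t)) (snd p)"

definition has_partials_on :: "(real \<times> real \<Rightarrow> real) \<Rightarrow> (real \<times> real) set \<Rightarrow> bool" where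
  "has_partials_on u S \<longleftrightarrow>
     (\<forall>p\<in>S. (\<lambda>t. u (t, snd p)) differentiable (at (fst p)) \<and>
            (\<lambda>t. u (fst p, t)) differentiable (at (snd p)))"

definition C2_on :: "(real \<times> real \<Rightarrow> real) \<Rightarrow> (real \<times> real) set \<Rightarrow> bool" where
  "C2_on u S \<longleftrightarrow>
     has_partials_on u S \<and> has_partials_on (pd_s u) S \<and> has_partials_on (pd_t u) S \<and>
     continuous_on S u \<and> continuous_on S (pd_s u) \<and> continuous_on S (pd_t u) \<and>
     continuous_on S (pd_s (pd_s u)) \<and> continuous_on S (pd_t (pd_s u)) \<and>
     continuous_on S (pd_s (pd_t u)) \<and> continuous_on S (pd_t (pd_t u))"

definition laplacian_E ::
  "(real \<Rightarrow> real) \<Rightarrow> (real \<Rightarrow> real) \<Rightarrow> (real \<times> real \<Rightarrow> real) \<Rightarrow> real \<times> real \<Rightarrow> real" where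
  "laplacian_E g1 g2 u p =
     (let sg = (\<lambda>s. sqrt (G11 g1 g2 s * G22 g1 g2 s)) in
      (1 / sg (fst p)) *
      (pd_s (\<lambda>q. sg (fst q) / G11 g1 g2 (fst q) * pd_s u q) p +
       pd_t (\<lambda>q. sg (fst q) / G22 g1 g2 (fst q) * pd_t u q) p))"

text \<open>Bounded harmonic functions on E, written in the coordinates (s, theta):
  2pi-periodic in theta (i.e. functions on E), continuous on E = {s \<ge> 0},
  C^2 and harmonic in the interior {s > 0}, and bounded.\<close>
definition bounded_harmonic_on_end ::
  "(real \<Rightarrow> real) \<Rightarrow> (real \<Rightarrow> real) \<Rightarrow> (real \<times> real \<Rightarrow> real) \<Rightarrow> bool" where
  "bounded_harmonic_on_end g1 g2 u \<longleftrightarrow>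
     (\<forall>s \<theta>. u (s, \<theta> + 2*pi) = u (s, \<theta>)) \<and>
     continuous_on {p. fst p \<ge> 0} u \<and>
     C2_on u {p. fst p > 0} \<and>
     (\<forall>p. fst p > 0 \<longrightarrow> laplacian_E g1 g2 u p = 0) \<and>
     (\<exists>B. \<forall>p. fst p \<ge> 0 \<longrightarrow> \<bar>u p\<bar> \<le> B)"

definition parabolic_end :: "(real \<Rightarrow> real) \<Rightarrow> (real \<Rightarrow> real) \<Rightarrow> bool" where
  "parabolic_end g1 g2 \<longleftrightarrow>
     (\<forall>u v. bounded_harmonic_on_end g1 g2 u \<and> bounded_harmonic_on_end g1 g2 v \<and>
            (\<forall>\<theta>. u (0, \<theta>) = v (0, \<theta>)) \<longrightarrow>
            (\<forall>p. fst p \<ge> 0 \<longrightarrow> u p = v p))"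

end

theory Submission
  imports Defs
begin

(* Suppose the end stays at height x3 >= c > 0. Let A = g1 / |gamma'| be the radial weight of the
   Laplacian in the coordinates (s, theta); then H(s) = integral of 1/A is a radial harmonic
   function. Since (ln g1)' <= 1/A we get g1 <= g1(0) exp H, so the hyperbolic speed
   |gamma'| / g2 is at most (g1(0) exp H / c) / A: bounded H would mean finite hyperbolic length,
   hence H is unbounded. This barrier gives the comparison principle. If bounded harmonic u, v
   agree at s = 0 but u > v at some point, then F = u - v - eps H + delta P, with
   P = integral of s/A strictly subharmonic, is positive there for small eps, delta, while
   F <= 0 on s = 0 and on s = S for S large. So the maximum of F on [0,S] x R is interior, which
   the second derivative test rules out. Hence the end is parabolic. *)

lemma DERIV_local_max_second_deriv_nonpos:
  fixes f f' :: "real \<Rightarrow> real"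
  assumes r: "r > 0"
    and f': "\<And>y. y \<in> ball x r \<Longrightarrow> (f has_real_derivative f' y) (at y)"
    and f'': "(f' has_real_derivative c) (at x)"
    and max: "\<And>y. y \<in> ball x r \<Longrightarrow> f y \<le> f x"
  shows "f' x = 0" and "c \<le> 0"
proof -
  show crit: "f' x = 0"
    using DERIV_local_max[OF f'[of x] r] max r by (auto simp: dist_real_def)
  show "c \<le> 0"
  proof (rule ccontr)
    assume "\<not> c \<le> 0"
    then obtain d where d: "d > 0" "\<And>h. h > 0 \<Longrightarrow> h < d \<Longrightarrow> f' x < f' (x + h)"
      using DERIV_pos_inc_right[OF f''] by (metis not_le)
    define h where "h = min d r / 2"
    have h: "h > 0" "h < d" "h < r" using d r by (auto simp: h_def)
    have in_ball: "y \<in> ball x r" if "x \<le> y" "y \<le> x + h" for y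
      using that h by (auto simp: dist_real_def)
    have "f x < f (x + h)"
    proof (rule DERIV_pos_imp_increasing_open[of x "x + h" f])
      show "continuous_on {x..x + h} f"
        by (rule continuous_at_imp_continuous_on) (meson DERIV_isCont atLeastAtMost_iff f' in_ball)
      fix y assume y: "x < y" "y < x + h"
      have "f' x < f' (x + (y - x))" using d(2)[of "y - x"] y h by simp
      then show "\<exists>l. (f has_real_derivative l) (at y) \<and> 0 < l"
        using f'[of y] in_ball[of y] y crit by auto
    qed (use h in simp)
    moreover have "f (x + h) \<le> f x" using max in_ball[of "x + h"] h by simp
    ultimately show False by simp
  qed
qed

lemma periodic_shift_int:
  fixes f :: "real \<Rightarrow> 'a"
  assumes per: "\<And>x. f (x + p) = f x"
  shows "f (x + of_int k * p) = f x"
proof -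
  have nat_shift: "f (y + real n * p) = f y" for y n
  proof (induction n)
    case (Suc n)
    have "f (y + real (Suc n) * p) = f ((y + real n * p) + p)" by (simp add: algebra_simps)
    then show ?case using per Suc.IH by simp
  qed simp
  show ?thesis
  proof (cases "k \<ge> 0")
    case True
    then show ?thesis using nat_shift[of x "nat k"] by simp
  next
    case False
    then show ?thesis using nat_shift[of "x + of_int k * p" "nat (- k)"] by simp
  qed
qed

lemma periodic_value_in_period:
  fixes f :: "real \<Rightarrow> 'a"
  assumes per: "\<And>x. f (x + p) = f x" and p: "p > 0"
  shows "\<exists>t\<in>{0..p}. f t = f x"
proof
  define k where "k = \<lfloor>x / p\<rfloor>"
  show "x - of_int k * p \<in> {0..p}"
    using p floor_divide_lower[OF p, of x] floor_divide_upper[OF p, of x]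
    by (auto simp: k_def algebra_simps)
  show "f (x - of_int k * p) = f x"
    using periodic_shift_int[of f p, OF per, of "x - of_int k * p" k] by simp
qed

lemma periodic_strip_attains_max:
  fixes F :: "real \<times> real \<Rightarrow> real"
  assumes cont: "continuous_on ({a..b} \<times> {0..p}) F" and "a \<le> b" "p > 0"
    and per: "\<And>t x. F (t, x + p) = F (t, x)"
  obtains s \<theta> where "s \<in> {a..b}" "\<And>t x. t \<in> {a..b} \<Longrightarrow> F (t, x) \<le> F (s, \<theta>)"
proof -
  have "compact ({a..b} \<times> {0..p})" "{a..b} \<times> {0..p} \<noteq> {}"
    using assms by (auto intro: compact_Times)
  then obtain m where m: "m \<in> {a..b} \<times> {0..p}" and max: "\<And>y. y \<in> {a..b} \<times> {0..p} \<Longrightarrow> F y \<le> F m"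
    using continuous_attains_sup[OF _ _ cont] by blast
  have "F (t, x) \<le> F m" if "t \<in> {a..b}" for t x
  proof -
    obtain x' where "x' \<in> {0..p}" "F (t, x') = F (t, x)"
      using periodic_value_in_period[of "\<lambda>x. F (t, x)" p x] per \<open>p > 0\<close> by blast
    then show ?thesis using max[of "(t, x')"] that by auto
  qed
  then show thesis using that[of "fst m" "snd m"] m by auto
qed

lemma integral_0_has_real_derivative:
  fixes f :: "real \<Rightarrow> real"
  assumes "continuous_on {0..} f" "t > 0"
  shows "((\<lambda>s. integral {0..s} f) has_real_derivative f t) (at t)"
proof -
  have "((\<lambda>s. integral {0..s} f) has_real_derivative f t) (at t within {0..t+1})"
    using assms by (intro integral_has_real_derivative continuous_on_subset[OF assms(1)]) auto
  moreover have "at t within {0..t+1} = at t" using assms(2) by (intro at_within_Icc_at) auto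
  ultimately show ?thesis by simp
qed

lemma continuous_on_integral_0:
  fixes f :: "real \<Rightarrow> real"
  assumes "continuous_on {0..} f"
  shows "continuous_on {0..S} (\<lambda>s. integral {0..s} f)"
  using assms
  by (intro indefinite_integral_continuous_1 integrable_continuous_interval)
     (auto intro: continuous_on_subset)

lemma smooth_real_differentiable: "smooth_real f \<Longrightarrow> f differentiable (at x)"
  unfolding smooth_real_def by (metis funpow_0)

lemma smooth_real_deriv_differentiable: "smooth_real f \<Longrightarrow> deriv f differentiable (at x)"
  unfolding smooth_real_def by (metis funpow_0 funpow_Suc_right o_apply)

lemma complete_end_curveD:
  assumes "complete_end_curve g1 g2"
  shows "smooth_real g1" "smooth_real g2"
    and "t \<ge> 0 \<Longrightarrow> g1 t > 0" "t \<ge> 0 \<Longrightarrow> g2 t > 0"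
    and "t \<ge> 0 \<Longrightarrow> (deriv g1 t)\<^sup>2 + (deriv g2 t)\<^sup>2 > 0"
  using assms unfolding complete_end_curve_def by auto

lemma continuous_on_hyp_speed:
  assumes "complete_end_curve g1 g2"
  shows "continuous_on {0..} (hyp_speed g1 g2)"
proof (rule continuous_at_imp_continuous_on, intro ballI)
  fix t :: real assume "t \<in> {0..}"
  have "isCont (deriv g1) t" "isCont (deriv g2) t" "isCont g2 t"
    using complete_end_curveD(1,2)[OF assms]
    by (auto intro: differentiable_imp_continuous_within
             smooth_real_differentiable smooth_real_deriv_differentiable)
  then show "isCont (hyp_speed g1 g2) t"
    unfolding hyp_speed_def[abs_def] using complete_end_curveD(4)[OF assms, of t] \<open>t \<in> {0..}\<close>
    by (intro continuous_intros) auto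
qed

definition area_density :: "(real \<Rightarrow> real) \<Rightarrow> (real \<Rightarrow> real) \<Rightarrow> real \<Rightarrow> real" where
  "area_density g1 g2 s = sqrt (G11 g1 g2 s * G22 g1 g2 s)"

definition radial_weight :: "(real \<Rightarrow> real) \<Rightarrow> (real \<Rightarrow> real) \<Rightarrow> real \<Rightarrow> real" where
  "radial_weight g1 g2 s = area_density g1 g2 s / G11 g1 g2 s"

definition angular_weight :: "(real \<Rightarrow> real) \<Rightarrow> (real \<Rightarrow> real) \<Rightarrow> real \<Rightarrow> real" where
  "angular_weight g1 g2 s = area_density g1 g2 s / G22 g1 g2 s"

lemma metric_coeffs_pos:
  assumes "complete_end_curve g1 g2" "t \<ge> 0"
  shows "G11 g1 g2 t > 0" "G22 g1 g2 t > 0" "area_density g1 g2 t > 0"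
    "radial_weight g1 g2 t > 0" "angular_weight g1 g2 t > 0"
proof -
  show G11: "G11 g1 g2 t > 0" and G22: "G22 g1 g2 t > 0"
    using complete_end_curveD(3-5)[OF assms] by (simp_all add: G11_def G22_def)
  then show "area_density g1 g2 t > 0" "radial_weight g1 g2 t > 0" "angular_weight g1 g2 t > 0"
    by (simp_all add: area_density_def radial_weight_def angular_weight_def)
qed

lemma radial_weight_eq:
  assumes "complete_end_curve g1 g2" "t \<ge> 0"
  shows "radial_weight g1 g2 t = g1 t / sqrt ((deriv g1 t)\<^sup>2 + (deriv g2 t)\<^sup>2)"
proof -
  define q where "q = sqrt ((deriv g1 t)\<^sup>2 + (deriv g2 t)\<^sup>2)"
  have pos: "g1 t > 0" "g2 t > 0" "q > 0"
    using complete_end_curveD(3-5)[OF assms] by (auto simp: q_def)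
  have G11: "G11 g1 g2 t = q\<^sup>2 / (g2 t)\<^sup>2" by (simp add: G11_def q_def)
  have "G11 g1 g2 t * G22 g1 g2 t = (q * g1 t / (g2 t)\<^sup>2)\<^sup>2"
    unfolding G11 G22_def by (simp add: power_divide power_mult_distrib field_simps)
  then have "area_density g1 g2 t = q * g1 t / (g2 t)\<^sup>2"
    using pos by (simp add: area_density_def)
  then show ?thesis
    using pos unfolding radial_weight_def G11 q_def[symmetric] by (simp add: field_simps power2_eq_square)
qed

lemma radial_weight_differentiable:
  assumes cec: "complete_end_curve g1 g2" and t: "t \<ge> 0"
  shows "radial_weight g1 g2 differentiable (at t)"
proof -
  note smooth = complete_end_curveD(1,2)[OF cec]
  note diff = smooth_real_differentiable[OF smooth(1)] smooth_real_differentiable[OF smooth(2)]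
    smooth_real_deriv_differentiable[OF smooth(1)] smooth_real_deriv_differentiable[OF smooth(2)]
  have g2t: "g2 t \<noteq> 0" using complete_end_curveD(4)[OF cec t] by simp
  have G11: "G11 g1 g2 differentiable (at t)" and G22: "G22 g1 g2 differentiable (at t)"
    unfolding G11_def[abs_def] G22_def[abs_def] using diff g2t
    by (auto intro!: derivative_intros)
  have "(\<lambda>x. sqrt (G11 g1 g2 x * G22 g1 g2 x)) differentiable (at t)"
  proof -
    obtain D where "((\<lambda>x. G11 g1 g2 x * G22 g1 g2 x) has_real_derivative D) (at t)"
      using differentiable_mult[OF G11 G22] real_differentiable_def by blast
    from DERIV_chain2[OF DERIV_real_sqrt this] show ?thesis
      using metric_coeffs_pos(1,2)[OF cec t] real_differentiable_def by (metis mult_pos_pos)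
  qed
  then show ?thesis
    unfolding radial_weight_def[abs_def] area_density_def[abs_def]
    using G11 metric_coeffs_pos(1)[OF cec t] by (intro differentiable_divide) auto
qed

lemma continuous_on_radial_weight:
  assumes "complete_end_curve g1 g2"
  shows "continuous_on {0..} (radial_weight g1 g2)"
  using radial_weight_differentiable[OF assms]
  by (intro continuous_at_imp_continuous_on) (auto intro: differentiable_imp_continuous_within)

lemma continuous_on_divide_radial_weight:
  assumes "complete_end_curve g1 g2" "continuous_on {0..} f"
  shows "continuous_on {0..} (\<lambda>t. f t / radial_weight g1 g2 t)"
  using assms continuous_on_radial_weight[OF assms(1)] metric_coeffs_pos(4)[OF assms(1)]
  by (intro continuous_intros) fastforce+

lemma pd_s_has_real_derivative:
  assumes "has_partials_on w {p. fst p > 0}" "t > 0"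
  shows "((\<lambda>t. w (t, x)) has_real_derivative pd_s w (t, x)) (at t)"
  using assms unfolding has_partials_on_def pd_s_def
  by (auto simp: DERIV_deriv_iff_real_differentiable)

lemma pd_t_has_real_derivative:
  assumes "has_partials_on w {p. fst p > 0}" "s > 0"
  shows "((\<lambda>x. w (s, x)) has_real_derivative pd_t w (s, x)) (at x)"
  using assms unfolding has_partials_on_def pd_t_def
  by (auto simp: DERIV_deriv_iff_real_differentiable)

lemma laplacian_E_expand:
  assumes cec: "complete_end_curve g1 g2" and s: "s > 0" and C2: "C2_on u {p. fst p > 0}"
  shows "laplacian_E g1 g2 u (s, \<theta>) =
    (deriv (radial_weight g1 g2) s * pd_s u (s, \<theta>) + radial_weight g1 g2 s * pd_s (pd_s u) (s, \<theta>)
     + angular_weight g1 g2 s * pd_t (pd_t u) (s, \<theta>)) / area_density g1 g2 s"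
proof -
  have hp: "has_partials_on (pd_s u) {p. fst p > 0}" "has_partials_on (pd_t u) {p. fst p > 0}"
    using C2 unfolding C2_on_def by auto
  have dA: "(radial_weight g1 g2 has_real_derivative deriv (radial_weight g1 g2) s) (at s)"
    using radial_weight_differentiable[OF cec] s by (simp add: DERIV_deriv_iff_real_differentiable)
  have radial: "pd_s (\<lambda>q. radial_weight g1 g2 (fst q) * pd_s u q) (s, \<theta>) =
      deriv (radial_weight g1 g2) s * pd_s u (s, \<theta>) + radial_weight g1 g2 s * pd_s (pd_s u) (s, \<theta>)"
    unfolding pd_s_def[of "\<lambda>q. radial_weight g1 g2 (fst q) * pd_s u q"] fst_conv snd_conv
    using DERIV_mult[OF dA pd_s_has_real_derivative[OF hp(1) s]]
    by (intro DERIV_imp_deriv) (simp add: algebra_simps)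
  have angular: "pd_t (\<lambda>q. angular_weight g1 g2 (fst q) * pd_t u q) (s, \<theta>) =
      angular_weight g1 g2 s * pd_t (pd_t u) (s, \<theta>)"
    unfolding pd_t_def[of "\<lambda>q. angular_weight g1 g2 (fst q) * pd_t u q"] fst_conv snd_conv
    by (intro DERIV_imp_deriv DERIV_cmult pd_t_has_real_derivative[OF hp(2) s])
  show ?thesis
    unfolding laplacian_E_def Let_def area_density_def[symmetric] radial_weight_def[symmetric]
      angular_weight_def[symmetric] radial angular
    by simp
qed

(* radial_weight * H' = 1 and radial_weight * P' = s, so by laplacian_E_expand H is harmonic and
   P strictly subharmonic. *)
definition radial_harmonic :: "(real \<Rightarrow> real) \<Rightarrow> (real \<Rightarrow> real) \<Rightarrow> real \<Rightarrow> real" where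
  "radial_harmonic g1 g2 s = integral {0..s} (\<lambda>t. 1 / radial_weight g1 g2 t)"

definition radial_subharmonic :: "(real \<Rightarrow> real) \<Rightarrow> (real \<Rightarrow> real) \<Rightarrow> real \<Rightarrow> real" where
  "radial_subharmonic g1 g2 s = integral {0..s} (\<lambda>t. t / radial_weight g1 g2 t)"

lemma continuous_on_radial_barrier_integrands:
  assumes "complete_end_curve g1 g2"
  shows "continuous_on {0..} (\<lambda>t. 1 / radial_weight g1 g2 t)"
    and "continuous_on {0..} (\<lambda>t. t / radial_weight g1 g2 t)"
  by (intro continuous_on_divide_radial_weight[OF assms] continuous_on_const continuous_on_id)+

lemma radial_harmonic_has_real_derivative:
  assumes "complete_end_curve g1 g2" "t > 0"
  shows "(radial_harmonic g1 g2 has_real_derivative 1 / radial_weight g1 g2 t) (at t)"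
  unfolding radial_harmonic_def[abs_def]
  by (rule integral_0_has_real_derivative[OF continuous_on_radial_barrier_integrands(1)[OF assms(1)] assms(2)])

lemma radial_subharmonic_has_real_derivative:
  assumes "complete_end_curve g1 g2" "t > 0"
  shows "(radial_subharmonic g1 g2 has_real_derivative t / radial_weight g1 g2 t) (at t)"
  unfolding radial_subharmonic_def[abs_def]
  by (rule integral_0_has_real_derivative
      [OF continuous_on_radial_barrier_integrands(2)[OF assms(1)] assms(2)])

lemma continuous_on_radial_barriers:
  assumes "complete_end_curve g1 g2"
  shows "continuous_on {0..S} (radial_harmonic g1 g2)"
    and "continuous_on {0..S} (radial_subharmonic g1 g2)"
  unfolding radial_harmonic_def[abs_def] radial_subharmonic_def[abs_def]
  by (intro continuous_on_integral_0 continuous_on_radial_barrier_integrands(1)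
      continuous_on_radial_barrier_integrands(2)[OF assms] assms)+

lemma radial_barriers_nonneg:
  assumes "complete_end_curve g1 g2"
  shows "radial_harmonic g1 g2 s \<ge> 0" and "radial_subharmonic g1 g2 s \<ge> 0"
  unfolding radial_harmonic_def radial_subharmonic_def
  using metric_coeffs_pos(4)[OF assms] continuous_on_radial_barrier_integrands(1)[OF assms]
    continuous_on_radial_barrier_integrands(2)[OF assms]
  by (auto intro!: integral_nonneg integrable_continuous_interval intro: continuous_on_subset
      simp: less_imp_le)

lemma radial_harmonic_mono:
  assumes "complete_end_curve g1 g2" "0 \<le> s" "s \<le> t"
  shows "radial_harmonic g1 g2 s \<le> radial_harmonic g1 g2 t"
  unfolding radial_harmonic_def
  using assms metric_coeffs_pos(4)[OF assms(1)] continuous_on_radial_barrier_integrands(1)[OF assms(1)]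
  by (intro integral_subset_le integrable_continuous_interval)
     (auto intro: continuous_on_subset simp: less_imp_le)

lemma profile_radius_le_exp_radial_harmonic:
  assumes cec: "complete_end_curve g1 g2" and T: "T \<ge> 0"
  shows "g1 T \<le> g1 0 * exp (radial_harmonic g1 g2 T)"
proof -
  note g1_pos = complete_end_curveD(3)[OF cec]
  have "((\<lambda>t. deriv g1 t / g1 t) has_integral (ln (g1 T) - ln (g1 0))) {0..T}"
  proof (rule fundamental_theorem_of_calculus[OF T])
    fix t assume t: "t \<in> {0..T}"
    have "(g1 has_real_derivative deriv g1 t) (at t)"
      using smooth_real_differentiable[OF complete_end_curveD(1)[OF cec]]
      by (simp add: DERIV_deriv_iff_real_differentiable)
    then have "((\<lambda>x. ln (g1 x)) has_real_derivative deriv g1 t / g1 t) (at t)"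
      using g1_pos[of t] t by (auto intro!: derivative_eq_intros)
    then show "((\<lambda>x. ln (g1 x)) has_vector_derivative deriv g1 t / g1 t) (at t within {0..T})"
      by (simp add: has_real_derivative_iff_has_vector_derivative[symmetric] has_field_derivative_at_within)
  qed
  then have log: "ln (g1 T) - ln (g1 0) = integral {0..T} (\<lambda>t. deriv g1 t / g1 t)"
    and integrable: "(\<lambda>t. deriv g1 t / g1 t) integrable_on {0..T}"
    by (auto simp: integral_unique has_integral_integrable)
  have "integral {0..T} (\<lambda>t. deriv g1 t / g1 t) \<le> radial_harmonic g1 g2 T"
    unfolding radial_harmonic_def
  proof (rule integral_le[OF integrable])
    show "(\<lambda>t. 1 / radial_weight g1 g2 t) integrable_on {0..T}"
      by (intro integrable_continuous_interval
          continuous_on_subset[OF continuous_on_radial_barrier_integrands(1)[OF cec]]) auto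
    fix t assume t: "t \<in> {0..T}"
    have "deriv g1 t \<le> sqrt ((deriv g1 t)\<^sup>2 + (deriv g2 t)\<^sup>2)"
      by (rule real_sqrt_sum_squares_ge1)
    then show "deriv g1 t / g1 t \<le> 1 / radial_weight g1 g2 t"
      using radial_weight_eq[OF cec, of t] g1_pos[of t] t by (simp add: divide_right_mono)
  qed
  then have "ln (g1 T) \<le> ln (g1 0) + radial_harmonic g1 g2 T" using log by simp
  then have "exp (ln (g1 T)) \<le> exp (ln (g1 0) + radial_harmonic g1 g2 T)" by simp
  then show ?thesis using g1_pos[of T] g1_pos[of 0] T by (simp add: exp_add)
qed

lemma hyp_speed_eq:
  assumes "complete_end_curve g1 g2" "t \<ge> 0"
  shows "hyp_speed g1 g2 t = g1 t / g2 t / radial_weight g1 g2 t"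
  using radial_weight_eq[OF assms] complete_end_curveD(3-5)[OF assms(1) assms(2)]
  by (simp add: hyp_speed_def field_simps)

lemma hyp_length_le_radial_harmonic_bound:
  assumes cec: "complete_end_curve g1 g2"
    and c: "c > 0" and low: "\<And>s. s \<ge> 0 \<Longrightarrow> c \<le> g2 s"
    and bounded: "\<And>t. t \<ge> 0 \<Longrightarrow> radial_harmonic g1 g2 t \<le> Z" and T: "T \<ge> 0"
  shows "integral {0..T} (hyp_speed g1 g2) \<le> g1 0 * exp Z / c * Z"
proof -
  define G where "G = g1 0 * exp Z"
  have "G > 0" using complete_end_curveD(3)[OF cec, of 0] by (simp add: G_def)
  have speed: "hyp_speed g1 g2 t \<le> G / c * (1 / radial_weight g1 g2 t)" if t: "t \<ge> 0" for t
  proof -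
    have "g1 t \<le> g1 0 * exp (radial_harmonic g1 g2 t)"
      by (rule profile_radius_le_exp_radial_harmonic[OF cec t])
    also have "\<dots> \<le> G"
      unfolding G_def using bounded[OF t] complete_end_curveD(3)[OF cec, of 0] by simp
    finally have "g1 t / g2 t \<le> G / c"
      using complete_end_curveD(3)[OF cec t] low[OF t] c \<open>G > 0\<close> by (intro frac_le) auto
    then have "g1 t / g2 t / radial_weight g1 g2 t \<le> G / c / radial_weight g1 g2 t"
      using metric_coeffs_pos(4)[OF cec t] by (intro divide_right_mono) auto
    then show ?thesis using hyp_speed_eq[OF cec t] by simp
  qed
  have "integral {0..T} (hyp_speed g1 g2) \<le> integral {0..T} (\<lambda>t. G / c * (1 / radial_weight g1 g2 t))"
  proof (rule integral_le)
    show "hyp_speed g1 g2 integrable_on {0..T}"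
      by (intro integrable_continuous_interval continuous_on_subset[OF continuous_on_hyp_speed[OF cec]])
         auto
    show "(\<lambda>t. G / c * (1 / radial_weight g1 g2 t)) integrable_on {0..T}"
      by (intro integrable_continuous_interval continuous_on_mult continuous_on_const
          continuous_on_subset[OF continuous_on_radial_barrier_integrands(1)[OF cec]]) auto
  qed (use speed in auto)
  also have "\<dots> = G / c * radial_harmonic g1 g2 T"
    unfolding radial_harmonic_def by (rule integral_mult_right)
  also have "\<dots> \<le> G / c * Z"
    using bounded[OF T] \<open>G > 0\<close> c by (intro mult_left_mono) auto
  finally show ?thesis by (simp add: G_def)
qed

lemma radial_harmonic_unbounded:
  assumes cec: "complete_end_curve g1 g2"
    and c: "c > 0" and low: "\<And>s. s \<ge> 0 \<Longrightarrow> c \<le> g2 s"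
  shows "filterlim (radial_harmonic g1 g2) at_top at_top"
  unfolding filterlim_at_top eventually_at_top_linorder
proof
  fix Z
  show "\<exists>N. \<forall>T\<ge>N. Z \<le> radial_harmonic g1 g2 T"
  proof (rule ccontr)
    assume not_eventually: "\<not> ?thesis"
    have "radial_harmonic g1 g2 T \<le> Z" if "T \<ge> 0" for T
    proof -
      obtain T' where "T \<le> T'" "radial_harmonic g1 g2 T' < Z"
        using not_eventually by (auto simp: not_le)
      then show ?thesis using radial_harmonic_mono[OF cec that] by fastforce
    qed
    note length = hyp_length_le_radial_harmonic_bound[OF cec c low this]
    obtain N where "\<And>T. T \<ge> N \<Longrightarrow> g1 0 * exp Z / c * Z + 1 \<le> integral {0..T} (hyp_speed g1 g2)"
      using cec unfolding complete_end_curve_def filterlim_at_top eventually_at_top_linorder by blast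
    from this[of "max N 0"] length[of "max N 0"] show False by simp
  qed
qed

(* With b the slope (eps - delta t) / A of eps H - delta P, this says (A b)' = - delta:
   the barrier is strictly superharmonic. *)
lemma barrier_slope_has_real_derivative:
  assumes cec: "complete_end_curve g1 g2" and s: "s > 0"
  shows "((\<lambda>t. (\<epsilon> - \<delta> * t) / radial_weight g1 g2 t) has_real_derivative
    (- \<delta> - deriv (radial_weight g1 g2) s * ((\<epsilon> - \<delta> * s) / radial_weight g1 g2 s))
      / radial_weight g1 g2 s) (at s)"
proof -
  have "radial_weight g1 g2 s > 0" using metric_coeffs_pos(4)[OF cec] s by simp
  moreover have "(radial_weight g1 g2 has_real_derivative deriv (radial_weight g1 g2) s) (at s)"
    using radial_weight_differentiable[OF cec] s by (simp add: DERIV_deriv_iff_real_differentiable)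
  ultimately show ?thesis
    by (auto intro!: derivative_eq_intros simp: field_simps power2_eq_square)
qed

lemma harmonic_difference_no_interior_max:
  fixes g1 g2 :: "real \<Rightarrow> real" and u v :: "real \<times> real \<Rightarrow> real" and \<epsilon> \<delta> :: real
  defines "F \<equiv> \<lambda>q. u q - v q - \<epsilon> * radial_harmonic g1 g2 (fst q) + \<delta> * radial_subharmonic g1 g2 (fst q)"
  assumes cec: "complete_end_curve g1 g2"
    and C2: "C2_on u {p. fst p > 0}" "C2_on v {p. fst p > 0}"
    and harmonic: "\<And>p. fst p > 0 \<Longrightarrow> laplacian_E g1 g2 u p = 0"
      "\<And>p. fst p > 0 \<Longrightarrow> laplacian_E g1 g2 v p = 0"
    and \<delta>: "\<delta> > 0" and r: "0 < r" "r \<le> s"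
    and max: "\<And>t x. t \<in> ball s r \<Longrightarrow> F (t, x) \<le> F (s, \<theta>)"
  shows False
proof -
  let ?A = "radial_weight g1 g2" and ?b = "\<lambda>t. (\<epsilon> - \<delta> * t) / radial_weight g1 g2 t"
  define A' where "A' = deriv ?A s"
  define b' where "b' = (- \<delta> - A' * ?b s) / ?A s"
  define w_s where "w_s = pd_s u (s, \<theta>) - pd_s v (s, \<theta>)"
  define w_ss where "w_ss = pd_s (pd_s u) (s, \<theta>) - pd_s (pd_s v) (s, \<theta>)"
  define w_tt where "w_tt = pd_t (pd_t u) (s, \<theta>) - pd_t (pd_t v) (s, \<theta>)"
  have s: "s > 0" using r by simp
  have A: "?A s > 0" using metric_coeffs_pos(4)[OF cec] s by simp
  have near_pos: "t > 0" if "t \<in> ball s r" for t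
    using that r by (auto simp: dist_real_def)
  have partials: "has_partials_on w {p. fst p > 0}" "has_partials_on (pd_s w) {p. fst p > 0}"
    "has_partials_on (pd_t w) {p. fst p > 0}" if "w \<in> {u, v}" for w
    using C2 that unfolding C2_on_def by auto
  have "w_tt \<le> 0"
    unfolding w_tt_def
  proof (rule DERIV_local_max_second_deriv_nonpos(2)
      [of 1 \<theta> "\<lambda>x. F (s, x)" "\<lambda>x. pd_t u (s, x) - pd_t v (s, x)"])
    fix y
    show "((\<lambda>x. F (s, x)) has_real_derivative pd_t u (s, y) - pd_t v (s, y)) (at y)"
      unfolding F_def fst_conv
      using pd_t_has_real_derivative[OF partials(1) s] by (auto intro!: derivative_eq_intros)
    show "F (s, y) \<le> F (s, \<theta>)" using max r by simp
  qed (use pd_t_has_real_derivative[OF partials(3) s] in \<open>auto intro: DERIV_diff\<close>)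
  then have angular: "angular_weight g1 g2 s * w_tt \<le> 0"
    using metric_coeffs_pos(5)[OF cec, of s] s by (intro mult_nonneg_nonpos) auto
  have radial_deriv: "((\<lambda>t. F (t, \<theta>)) has_real_derivative
      pd_s u (y, \<theta>) - pd_s v (y, \<theta>) - ?b y) (at y)" if "y \<in> ball s r" for y
  proof -
    have "((\<lambda>t. F (t, \<theta>)) has_real_derivative
        pd_s u (y, \<theta>) - pd_s v (y, \<theta>) - \<epsilon> * (1 / ?A y) + \<delta> * (y / ?A y)) (at y)"
      unfolding F_def fst_conv using near_pos[OF that]
      by (intro DERIV_add DERIV_diff DERIV_cmult pd_s_has_real_derivative[OF partials(1)]
          radial_harmonic_has_real_derivative[OF cec] radial_subharmonic_has_real_derivative[OF cec]) auto
    then show ?thesis by (simp add: diff_divide_distrib algebra_simps)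
  qed
  have "((\<lambda>t. pd_s u (t, \<theta>) - pd_s v (t, \<theta>) - ?b t) has_real_derivative w_ss - b') (at s)"
    unfolding w_ss_def b'_def A'_def
    by (intro DERIV_diff pd_s_has_real_derivative[OF partials(2) s]
        barrier_slope_has_real_derivative[OF cec s]) auto
  from DERIV_local_max_second_deriv_nonpos[OF r(1) radial_deriv this] max
  have radial: "w_s = ?b s" "w_ss \<le> b'" by (auto simp: w_s_def)
  have "A' * w_s + ?A s * w_ss + angular_weight g1 g2 s * w_tt = 0"
    using harmonic[of "(s, \<theta>)"] laplacian_E_expand[OF cec s C2(1)] laplacian_E_expand[OF cec s C2(2)]
      metric_coeffs_pos(3)[OF cec, of s] s
    by (simp add: A'_def w_s_def w_ss_def w_tt_def algebra_simps)
  then have "0 \<le> A' * w_s + ?A s * w_ss" using angular by linarith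
  also have "\<dots> \<le> A' * ?b s + ?A s * b'" using radial A by simp
  also have "\<dots> = - \<delta>" using A by (simp add: b'_def)
  finally show False using \<delta> by simp
qed

lemma barrier_strip_max_principle:
  fixes g1 g2 :: "real \<Rightarrow> real" and u v :: "real \<times> real \<Rightarrow> real" and \<epsilon> \<delta> :: real
  defines "F \<equiv> \<lambda>q. u q - v q - \<epsilon> * radial_harmonic g1 g2 (fst q) + \<delta> * radial_subharmonic g1 g2 (fst q)"
  assumes cec: "complete_end_curve g1 g2"
    and u: "bounded_harmonic_on_end g1 g2 u" and v: "bounded_harmonic_on_end g1 g2 v"
    and \<delta>: "\<delta> > 0"
    and boundary: "\<And>\<theta>. F (0, \<theta>) \<le> 0" "\<And>\<theta>. F (S, \<theta>) \<le> 0"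
    and t: "t \<in> {0..S}"
  shows "F (t, x) \<le> 0"
proof -
  have cont: "continuous_on ({0..S} \<times> {0..2 * pi}) F"
  proof -
    have "{0..S} \<times> {0..2 * pi} \<subseteq> {p. fst p \<ge> 0}" "fst ` ({0..S} \<times> {0..2 * pi}) \<subseteq> {0..S}"
      by auto
    then show ?thesis
      using u v continuous_on_radial_barriers[OF cec, of S] unfolding F_def bounded_harmonic_on_end_def
      by (intro continuous_intros continuous_on_compose2[OF _ continuous_on_fst])
         (auto intro: continuous_on_subset)
  qed
  have periodic: "F (t, x + 2 * pi) = F (t, x)" for t x
    using u v unfolding F_def bounded_harmonic_on_end_def by simp
  have "0 \<le> S" using t by simp
  then obtain s \<theta> where s: "s \<in> {0..S}" and max: "\<And>t x. t \<in> {0..S} \<Longrightarrow> F (t, x) \<le> F (s, \<theta>)"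
    by (rule periodic_strip_attains_max[OF cont _ _ periodic]) auto
  show ?thesis
  proof (rule ccontr)
    assume "\<not> F (t, x) \<le> 0"
    then have "F (s, \<theta>) > 0" using max[OF t, of x] by simp
    then have "0 < s" "s < S" using s boundary[of \<theta>] by (auto simp: less_le)
    have "F (t', x') \<le> F (s, \<theta>)" if "t' \<in> ball s (min s (S - s))" for t' x'
      using that by (intro max) (auto simp: dist_real_def)
    then show False
      using u v \<open>0 < s\<close> \<open>s < S\<close> unfolding bounded_harmonic_on_end_def F_def
      by (intro harmonic_difference_no_interior_max[OF cec, where u = u and v = v and \<epsilon> = \<epsilon>
          and \<delta> = \<delta> and r = "min s (S - s)" and s = s and \<theta> = \<theta>] \<delta>) auto
  qed
qed

lemma bounded_harmonic_comparison:
  assumes cec: "complete_end_curve g1 g2"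
    and c: "c > 0" and low: "\<And>s. s \<ge> 0 \<Longrightarrow> c \<le> g2 s"
    and u: "bounded_harmonic_on_end g1 g2 u" and v: "bounded_harmonic_on_end g1 g2 v"
    and boundary: "\<And>\<theta>. u (0, \<theta>) = v (0, \<theta>)" and p: "fst p \<ge> 0"
  shows "u p \<le> v p"
proof (rule ccontr)
  let ?H = "radial_harmonic g1 g2" and ?P = "radial_subharmonic g1 g2"
  assume "\<not> u p \<le> v p"
  then have \<eta>: "u p - v p > 0" by simp
  obtain s1 \<theta>1 where p_eq: "p = (s1, \<theta>1)" by (cases p)
  obtain Bu Bv where Bu: "\<And>q. fst q \<ge> 0 \<Longrightarrow> \<bar>u q\<bar> \<le> Bu" and Bv: "\<And>q. fst q \<ge> 0 \<Longrightarrow> \<bar>v q\<bar> \<le> Bv"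
    using u v unfolding bounded_harmonic_on_end_def by metis
  have bound: "u q - v q \<le> Bu + Bv" if "fst q \<ge> 0" for q
    using Bu[OF that] Bv[OF that] by linarith
  define \<epsilon> where "\<epsilon> = (u p - v p) / (3 * (?H s1 + 1))"
  have "\<epsilon> > 0" using \<eta> radial_barriers_nonneg(1)[OF cec, of s1] by (simp add: \<epsilon>_def)
  have \<epsilon>_H: "\<epsilon> * ?H s1 \<le> (u p - v p) / 3"
    using \<eta> radial_barriers_nonneg(1)[OF cec, of s1] by (simp add: \<epsilon>_def field_simps)
  have "eventually (\<lambda>S. (Bu + Bv + 1) / \<epsilon> \<le> ?H S \<and> s1 \<le> S) at_top"
    using radial_harmonic_unbounded[OF cec c low] eventually_ge_at_top
    unfolding filterlim_at_top by (intro eventually_conj) auto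
  then obtain S where "(Bu + Bv + 1) / \<epsilon> \<le> ?H S" and "s1 \<le> S"
    unfolding eventually_at_top_linorder by (meson order_refl)
  then have \<epsilon>_H_S: "Bu + Bv + 1 \<le> \<epsilon> * ?H S"
    using \<open>\<epsilon> > 0\<close> by (simp add: field_simps)
  define \<delta> where "\<delta> = 1 / (2 * (?P S + 1))"
  have "\<delta> > 0" and \<delta>_P: "\<delta> * ?P S \<le> 1 / 2"
    using radial_barriers_nonneg(2)[OF cec, of S] by (simp_all add: \<delta>_def field_simps)
  have "u p - v p - \<epsilon> * ?H s1 + \<delta> * ?P s1 \<le> 0"
    unfolding p_eq fst_conv
  proof (rule barrier_strip_max_principle[OF cec u v \<open>\<delta> > 0\<close>, unfolded fst_conv])
    show "u (0, \<theta>) - v (0, \<theta>) - \<epsilon> * ?H 0 + \<delta> * ?P 0 \<le> 0" for \<theta>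
      using boundary by (simp add: radial_harmonic_def radial_subharmonic_def)
    show "u (S, \<theta>) - v (S, \<theta>) - \<epsilon> * ?H S + \<delta> * ?P S \<le> 0" for \<theta>
      using bound[of "(S, \<theta>)"] \<epsilon>_H_S \<delta>_P p p_eq \<open>s1 \<le> S\<close> by simp
    show "s1 \<in> {0..S}" using p p_eq \<open>s1 \<le> S\<close> by simp
  qed
  moreover have "\<delta> * ?P s1 \<ge> 0"
    using \<open>\<delta> > 0\<close> radial_barriers_nonneg(2)[OF cec, of s1] by simp
  ultimately show False using \<eta> \<epsilon>_H p_eq by simp
qed

lemma parabolic_if_height_bounded_below:
  assumes cec: "complete_end_curve g1 g2"
    and c: "c > 0" and low: "\<And>s. s \<ge> 0 \<Longrightarrow> c \<le> g2 s"
  shows "parabolic_end g1 g2"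
  unfolding parabolic_end_def
  using bounded_harmonic_comparison[OF cec c low] by (metis order_antisym)

theorem corollaryE:
  fixes g1 g2 :: "real \<Rightarrow> real"
  assumes "complete_end_curve g1 g2"
    and "\<not> parabolic_end g1 g2"
  shows "(INF p\<in>end_set g1 g2. snd (snd p)) = 0"
proof -
  let ?c = "INF p\<in>end_set g1 g2. snd (snd p)"
  have on_end: "(g1 s * cos 0, g1 s * sin 0, g2 s) \<in> end_set g1 g2" if "s \<ge> 0" for s
    unfolding end_set_def using that by (intro CollectI exI[of _ s] exI[of _ 0]) auto
  have height_pos: "snd (snd p) > 0" if "p \<in> end_set g1 g2" for p
    using that complete_end_curveD(4)[OF assms(1)] unfolding end_set_def by auto
  have bdd: "bdd_below ((\<lambda>p. snd (snd p)) ` end_set g1 g2)"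
    using height_pos by (intro bdd_belowI[of _ 0]) (auto simp: less_imp_le)
  have low: "?c \<le> g2 s" if "s \<ge> 0" for s
    using cINF_lower[OF bdd on_end[OF that]] by simp
  have "?c \<ge> 0"
    using height_pos on_end[of 0] by (intro cINF_greatest) (auto simp: less_imp_le)
  moreover have "\<not> ?c > 0"
    using parabolic_if_height_bounded_below[OF assms(1) _ low] assms(2) by blast
  ultimately show ?thesis by simp
qed

end
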